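(* Let $n \geq 1$ and let $D_m'$ (for $m \ge 1$) be the digraphs defined in the context. Then $D_n'$ has no induced directed cycle of odd length at least $5$, $\omega(D_n') \leq 3$, and $\vec{\chi}(D_{4n}') \geq n$.
   Context: Digraphs $D_m$ are defined recursively. $D_1$ is a single vertex with no edges. For $m \geq 2$, take $m-1$ disjoint copies $D_{m-1}^1,\dots,D_{m-1}^{m-1}$ of $D_{m-1}$; let $\mathcal{T}$ be the set of all sequences $T=(x_1,\dots,x_{m-1})$ with $x_i \in V(D_{m-1}^i)$ for each $i$. For each $T \in \mathcal{T}$ add a new vertex $v_T$ and, for each $i \in \{1,\dots,m-1\}$, an edge from $x_i$ to $v_T$. The resulting digraph is $D_m$. It is a known fact that $D_m$ is acyclic and that for any two vertices $u,v$ of $D_m$ there is at most one directed path from $u$ to $v$ in $D_m$. The length of a path is its number of edges. The digraph $D_m'$ has $V(D_m')=V(D_m)$ and, for every ordered pair $(u,v)$ of vertices such that there is a directed path in $D_m$ from $u$ to $v$: if that path has length $\equiv 1 \pmod 3$, $D_m'$ has the edge $uv$; if that path has length $\equiv 2 \pmod 3$, $D_m'$ has the edge $vu$. $D_m'$ has no other edges. The clique number $\omega(D)$ of a digraph is the clique number of its underlying undirected graph (same vertices, $u,v$ adjacent iff $uv$ or $vu$ is an edge). A digraph is acyclic if it has no directed cycle; $\vec{\chi}(D)$, the dichromatic number, is the least $k$ such that $V(D)$ can be partitioned into $k$ sets each inducing an acyclic subdigraph. An induced directed cycle is a directed cycle $v_1\cdots v_\ell v_1$ whose vertex set induces exactly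 the edges $v_iv_{i+1}$ (indices mod $\ell$). *)

theory Defs
  imports Main
begin

text \<open>Base is the unique vertex of D_1;
  Copy i x is vertex x of the i-th copy (0-based) of D_(m-1) inside D_m;
  New T is the new vertex v_T for the sequence T = (x_1,...,x_(m-1)).\<close>
datatype vtx = Base | Copy nat vtx | New "vtx list"

fun dV :: "nat \<Rightarrow> vtx set" where
  "dV 0 = {}"
| "dV (Suc 0) = {Base}"
| "dV (Suc (Suc k)) =
     {Copy i x | i x. i < Suc k \<and> x \<in> dV (Suc k)}
   \<union> {New xs | xs. length xs = Suc k \<and> (\<forall>i < Suc k. xs ! i \<in> dV (Suc k))}"

fun dE :: "nat \<Rightarrow> (vtx \<times> vtx) set" where
  "dE 0 = {}"
| "dE (Suc 0) = {}"
| "dE (Suc (Suc k)) =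
     {(Copy i x, Copy i y) | i x y. i < Suc k \<and> (x, y) \<in> dE (Suc k)}
   \<union> {(Copy i (xs ! i), New xs) | i xs. i < Suc k \<and> length xs = Suc k
         \<and> (\<forall>j < Suc k. xs ! j \<in> dV (Suc k))}"

text \<open>Directed path of length L from u to v in D_m (D_m is acyclic, so walks are paths).\<close>
definition dpath :: "nat \<Rightarrow> nat \<Rightarrow> vtx \<Rightarrow> vtx \<Rightarrow> bool" where
  "dpath m L u v \<longleftrightarrow> (u, v) \<in> dE m ^^ L"

definition dE' :: "nat \<Rightarrow> (vtx \<times> vtx) set" where
  "dE' m = {(u, v) | u v L. dpath m L u v \<and> L mod 3 = 1}
         \<union> {(v, u) | u v L. dpath m L u v \<and> L mod 3 = 2}"

definition adjacent :: "(vtx \<times> vtx) set \<Rightarrow> vtx \<Rightarrow> vtx \<Rightarrow> bool" where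
  "adjacent E u v \<longleftrightarrow> (u, v) \<in> E \<or> (v, u) \<in> E"

definition is_clique :: "vtx set \<Rightarrow> (vtx \<times> vtx) set \<Rightarrow> vtx set \<Rightarrow> bool" where
  "is_clique V E K \<longleftrightarrow> K \<subseteq> V \<and> (\<forall>u\<in>K. \<forall>v\<in>K. u \<noteq> v \<longrightarrow> adjacent E u v)"

definition clique_number :: "vtx set \<Rightarrow> (vtx \<times> vtx) set \<Rightarrow> nat" where
  "clique_number V E = Max {card K | K. is_clique V E K}"

definition induced_dcycle :: "vtx set \<Rightarrow> (vtx \<times> vtx) set \<Rightarrow> vtx list \<Rightarrow> bool" where
  "induced_dcycle V E vs \<longleftrightarrow> length vs \<ge> 2 \<and> distinct vs \<and> set vs \<subseteq> V \<and>
     (\<forall>i < length vs. \<forall>j < length vs.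
        (vs ! i, vs ! j) \<in> E \<longleftrightarrow> j = (i + 1) mod length vs)"

definition acyclic_colourable :: "vtx set \<Rightarrow> (vtx \<times> vtx) set \<Rightarrow> nat \<Rightarrow> bool" where
  "acyclic_colourable V E k \<longleftrightarrow>
     (\<exists>f. (\<forall>v\<in>V. f v < k) \<and>
          (\<forall>c < k. acyclic (E \<inter> ({v \<in> V. f v = c} \<times> {v \<in> V. f v = c}))))"

definition dichromatic_number :: "vtx set \<Rightarrow> (vtx \<times> vtx) set \<Rightarrow> nat" where
  "dichromatic_number V E = (LEAST k. acyclic_colourable V E k)"

end

theory Submission
  imports Defs
begin

text \<open>In D_m any two directed paths between the same vertices have the same length, so two
  vertices joined by a path have a well-defined signed distance, additive on mutually comparable
  triples, and uv is an edge of D_m' exactly when the signed distance from u to v is 1 mod 3.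
  Hence in a clique the distances from a fixed vertex are pairwise distinct mod 3, so a clique has
  at most three vertices. Along an induced directed cycle of length at least 4 the edges
  alternately follow and reverse paths of D_m, since two consecutive edges in the same sense
  would force a chord; so the cycle is even. Finally, a monochromatic directed path of length 2 in
  D_m is a directed triangle in D_m', so splitting each colour class of an acyclic k-colouring of
  D_m' according to whether a vertex has an in-neighbour of its own colour in D_m gives a proper
  2k-colouring of D_m, while Zykov's argument shows that D_m needs m colours.\<close>

section \<open>Reorienting paths by their length mod 3\<close>

definition mod3_reorientation :: "('a \<times> 'a) set \<Rightarrow> ('a \<times> 'a) set" where
  "mod3_reorientation E =
     {(u, v). \<exists>L. (u, v) \<in> E ^^ L \<and> L mod 3 = 1} \<union> {(v, u) | u v. \<exists>L. (u, v) \<in> E ^^ L \<and> L mod 3 = 2}"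

lemma mod3_reorientation_iff:
  "(u, v) \<in> mod3_reorientation E \<longleftrightarrow>
     (\<exists>L. (u, v) \<in> E ^^ L \<and> L mod 3 = 1) \<or> (\<exists>L. (v, u) \<in> E ^^ L \<and> L mod 3 = 2)"
  unfolding mod3_reorientation_def by blast

lemma mod3_reorientation_alternates:
  assumes ab: "(a, b) \<in> mod3_reorientation E" and bc: "(b, c) \<in> mod3_reorientation E"
    and ca: "(c, a) \<notin> mod3_reorientation E"
  shows "(\<exists>L. (a, b) \<in> E ^^ L \<and> L mod 3 = 1) \<longleftrightarrow> \<not> (\<exists>L. (b, c) \<in> E ^^ L \<and> L mod 3 = 1)"
proof -
  have "\<not> ((a, b) \<in> E ^^ L1 \<and> (b, c) \<in> E ^^ L2)" if "L1 mod 3 = 1" "L2 mod 3 = 1" for L1 L2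
  proof
    assume "(a, b) \<in> E ^^ L1 \<and> (b, c) \<in> E ^^ L2"
    then have "(a, c) \<in> E ^^ (L1 + L2)" by (auto simp: relpow_add)
    moreover have "(L1 + L2) mod 3 = 2" using that by presburger
    ultimately have "(c, a) \<in> mod3_reorientation E" unfolding mod3_reorientation_iff by blast
    with ca show False by contradiction
  qed
  moreover have "\<not> ((b, a) \<in> E ^^ L1 \<and> (c, b) \<in> E ^^ L2)" if "L1 mod 3 = 2" "L2 mod 3 = 2" for L1 L2
  proof
    assume "(b, a) \<in> E ^^ L1 \<and> (c, b) \<in> E ^^ L2"
    then have "(c, a) \<in> E ^^ (L2 + L1)" by (auto simp: relpow_add)
    moreover have "(L2 + L1) mod 3 = 1" using that by presburger
    ultimately have "(c, a) \<in> mod3_reorientation E" unfolding mod3_reorientation_iff by blast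
    with ca show False by contradiction
  qed
  ultimately show ?thesis using ab bc unfolding mod3_reorientation_iff by blast
qed

lemma induced_dcycle_mod3_reorientation_even:
  assumes cyc: "induced_dcycle V (mod3_reorientation E) vs" and l4: "4 \<le> length vs"
  shows "even (length vs)"
proof -
  define l where "l = length vs"
  define w where "w i = vs ! (i mod l)" for i
  let ?R = "mod3_reorientation E"
  define forward where "forward i \<longleftrightarrow> (\<exists>L. (w i, w (Suc i)) \<in> E ^^ L \<and> L mod 3 = 1)" for i
  have l: "0 < l" "4 \<le> l" using l4 by (auto simp: l_def)
  have R_w: "(w i, w j) \<in> ?R \<longleftrightarrow> j mod l = Suc (i mod l) mod l" for i j
    using cyc l unfolding induced_dcycle_def w_def l_def by simp
  have edge: "(w i, w (Suc i)) \<in> ?R" for i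
    using R_w mod_Suc_eq by simp
  have non_edge: "(w (Suc (Suc i)), w i) \<notin> ?R" for i
  proof
    assume "(w (Suc (Suc i)), w i) \<in> ?R"
    then have "Suc (Suc (Suc i)) mod l = i mod l" using R_w by (simp add: mod_Suc_eq)
    then have "l dvd 3" using mod_eq_dvd_iff_nat[of i "Suc (Suc (Suc i))" l] by simp
    then show False using l by (auto dest: dvd_imp_le)
  qed
  have alternate: "forward (Suc i) \<longleftrightarrow> \<not> forward i" for i
    using mod3_reorientation_alternates[OF edge[of i] edge[of "Suc i"] non_edge[of i]]
    unfolding forward_def by blast
  have "forward i \<longleftrightarrow> (forward 0 \<longleftrightarrow> even i)" for i
    by (induction i) (simp_all add: alternate)
  moreover have "forward l = forward 0"
  proof -
    have "Suc l mod l = Suc 0 mod l" using mod_add_self2[of 1 l] by simp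
    then show ?thesis unfolding forward_def w_def using l by simp
  qed
  ultimately show ?thesis unfolding l_def by blast
qed

section \<open>Signed distances and cliques\<close>

definition signed_dist :: "('a \<times> 'a) set \<Rightarrow> 'a \<Rightarrow> 'a \<Rightarrow> int \<Rightarrow> bool" where
  "signed_dist E u v D \<longleftrightarrow> (0 \<le> D \<and> (u, v) \<in> E ^^ nat D) \<or> (D < 0 \<and> (v, u) \<in> E ^^ nat (- D))"

lemma signed_dist_swap: "signed_dist E u v D \<Longrightarrow> signed_dist E v u (- D)"
  unfolding signed_dist_def by (cases "D = 0") auto

lemma signed_dist_add_nonneg:
  "signed_dist E u v A \<Longrightarrow> signed_dist E v w B \<Longrightarrow> 0 \<le> A \<Longrightarrow> 0 \<le> B \<Longrightarrow> signed_dist E u w (A + B)"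
  unfolding signed_dist_def by (auto simp: nat_add_distrib relpow_add)

lemma mod3_reorientation_iff_signed_dist:
  "(u, v) \<in> mod3_reorientation E \<longleftrightarrow> (\<exists>D. signed_dist E u v D \<and> D mod 3 = 1)"
proof
  assume "(u, v) \<in> mod3_reorientation E"
  then consider L where "(u, v) \<in> E ^^ L" "L mod 3 = 1" | L where "(v, u) \<in> E ^^ L" "L mod 3 = 2"
    unfolding mod3_reorientation_iff by blast
  then show "\<exists>D. signed_dist E u v D \<and> D mod 3 = 1"
  proof cases
    case 1
    moreover have "int L mod 3 = 1" using 1(2) by presburger
    ultimately have "signed_dist E u v (int L) \<and> int L mod 3 = 1"
      unfolding signed_dist_def by simp
    then show ?thesis by blast
  next
    case 2
    moreover have "0 < L" and "(- int L) mod 3 = 1" using 2(2) by presburger+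
    ultimately have "signed_dist E u v (- int L) \<and> (- int L) mod 3 = 1"
      unfolding signed_dist_def by simp
    then show ?thesis by blast
  qed
next
  assume "\<exists>D. signed_dist E u v D \<and> D mod 3 = 1"
  then obtain D where D: "signed_dist E u v D" "D mod 3 = 1" by blast
  show "(u, v) \<in> mod3_reorientation E"
  proof (cases "0 \<le> D")
    case True
    then have "nat D mod 3 = nat (D mod 3)" by (simp add: nat_mod_distrib)
    then have "(u, v) \<in> E ^^ nat D \<and> nat D mod 3 = 1" using D True unfolding signed_dist_def by simp
    then show ?thesis unfolding mod3_reorientation_iff by (intro disjI1 exI)
  next
    case False
    then have "nat (- D) mod 3 = nat ((- D) mod 3)" by (simp add: nat_mod_distrib)
    moreover have "(- D) mod 3 = 2" using D(2) by presburger
    ultimately have "(v, u) \<in> E ^^ nat (- D) \<and> nat (- D) mod 3 = 2"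
      using D False unfolding signed_dist_def by simp
    then show ?thesis unfolding mod3_reorientation_iff by (intro disjI2 exI)
  qed
qed

lemma adjacent_mod3_reorientation_signed_dist:
  assumes "adjacent (mod3_reorientation E) u v"
  shows "\<exists>D. signed_dist E u v D \<and> D mod 3 \<noteq> 0"
  using assms unfolding adjacent_def
proof
  assume "(u, v) \<in> mod3_reorientation E"
  then obtain D where "signed_dist E u v D" "D mod 3 = 1"
    unfolding mod3_reorientation_iff_signed_dist by blast
  then show ?thesis by (intro exI[of _ D]) simp
next
  assume "(v, u) \<in> mod3_reorientation E"
  then obtain D where D: "signed_dist E v u D" "D mod 3 = 1"
    unfolding mod3_reorientation_iff_signed_dist by blast
  have "(- D) mod 3 \<noteq> 0" using D(2) by presburger
  then show ?thesis using signed_dist_swap[OF D(1)] by blast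
qed

locale unique_path_lengths =
  fixes E :: "('a \<times> 'a) set"
  assumes relpow_length_unique: "(u, v) \<in> E ^^ L \<Longrightarrow> (u, v) \<in> E ^^ L' \<Longrightarrow> L = L'"
begin

lemma relpow_cycle_length: "(u, u) \<in> E ^^ L \<Longrightarrow> L = 0"
  using relpow_length_unique[of u u L 0] by simp

lemma mod3_reorientation_irrefl: "(u, u) \<notin> mod3_reorientation E"
proof
  assume "(u, u) \<in> mod3_reorientation E"
  then obtain L where "(u, u) \<in> E ^^ L" "L mod 3 \<noteq> 0" unfolding mod3_reorientation_iff by auto
  then show False using relpow_cycle_length[of u L] by simp
qed

lemma signed_dist_unique:
  assumes "signed_dist E u v A" "signed_dist E u v B"
  shows "A = B"
proof -
  have opposite: False if "(x, y) \<in> E ^^ nat P" "(y, x) \<in> E ^^ nat (- Q)" "Q < 0" for x y P Q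
  proof -
    have "(x, x) \<in> E ^^ (nat P + nat (- Q))" using that by (auto simp: relpow_add)
    then show False using relpow_cycle_length[of x "nat P + nat (- Q)"] that(3) by simp
  qed
  show ?thesis
  proof (cases "0 \<le> A"; cases "0 \<le> B")
    assume "0 \<le> A" "0 \<le> B"
    then have "nat A = nat B" using assms relpow_length_unique unfolding signed_dist_def by auto
    with \<open>0 \<le> A\<close> \<open>0 \<le> B\<close> show ?thesis by simp
  next
    assume "\<not> 0 \<le> A" "\<not> 0 \<le> B"
    then have "nat (- A) = nat (- B)" using assms relpow_length_unique unfolding signed_dist_def by auto
    with \<open>\<not> 0 \<le> A\<close> \<open>\<not> 0 \<le> B\<close> show ?thesis by simp
  next
    assume "0 \<le> A" "\<not> 0 \<le> B"
    then show ?thesis using assms opposite[of u v A B] unfolding signed_dist_def by simp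
  next
    assume "\<not> 0 \<le> A" "0 \<le> B"
    then show ?thesis using assms opposite[of u v B A] unfolding signed_dist_def by simp
  qed
qed

lemma signed_dist_add:
  assumes uv: "signed_dist E u v A" and vw: "signed_dist E v w B" and uw: "signed_dist E u w C"
  shows "C = A + B"
proof -
  note add = signed_dist_add_nonneg and swap = signed_dist_swap and unique = signed_dist_unique
  consider "0 \<le> A" "0 \<le> B" | "A < 0" "B < 0" | "0 \<le> A" "B < 0" "0 \<le> C" | "0 \<le> A" "B < 0" "C < 0"
    | "A < 0" "0 \<le> B" "0 \<le> C" | "A < 0" "0 \<le> B" "C < 0"
    by linarith
  then show ?thesis
  proof cases
    case 1
    then show ?thesis using unique[OF uw add[OF uv vw]] by simp
  next
    case 2
    then show ?thesis using unique[OF uw swap[OF add[OF swap[OF vw] swap[OF uv]]]] by simp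
  next
    case 3
    then show ?thesis using unique[OF uv add[OF uw swap[OF vw]]] by simp
  next
    case 4
    then show ?thesis using unique[OF swap[OF vw] add[OF swap[OF uw] uv]] by simp
  next
    case 5
    then show ?thesis using unique[OF vw add[OF swap[OF uv] uw]] by simp
  next
    case 6
    then show ?thesis using unique[OF swap[OF uv] add[OF vw swap[OF uw]]] by simp
  qed
qed

end

lemma card_clique_mod3_reorientation_le_3:
  assumes "unique_path_lengths E" and clique: "is_clique V (mod3_reorientation E) K"
  shows "card K \<le> 3"
proof (cases "K = {}")
  case False
  interpret unique_path_lengths E by fact
  obtain a where a: "a \<in> K" using False by blast
  have adjacent: "adjacent (mod3_reorientation E) x y" if "x \<in> K" "y \<in> K" "x \<noteq> y" for x y
    using clique that unfolding is_clique_def by blast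
  have dist: "\<exists>D. signed_dist E a v D" if "v \<in> K" for v
  proof (cases "v = a")
    case True
    then have "signed_dist E a v 0" unfolding signed_dist_def by simp
    then show ?thesis by blast
  next
    case False
    then show ?thesis using adjacent_mod3_reorientation_signed_dist adjacent[OF a that] by blast
  qed
  define d where "d v = (SOME D. signed_dist E a v D)" for v
  have d: "signed_dist E a v (d v)" if "v \<in> K" for v
    unfolding d_def using someI_ex[OF dist[OF that]] .
  have "inj_on (\<lambda>v. d v mod 3) K"
  proof (rule inj_onI)
    fix u v assume uv: "u \<in> K" "v \<in> K" "d u mod 3 = d v mod 3"
    show "u = v"
    proof (rule ccontr)
      assume "u \<noteq> v"
      then obtain D where D: "signed_dist E u v D" "D mod 3 \<noteq> 0"
        using adjacent_mod3_reorientation_signed_dist adjacent[OF uv(1,2)] by blast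
      have "d v = d u + D" using signed_dist_add[OF d[OF uv(1)] D(1) d[OF uv(2)]] .
      then show False using uv(3) D(2) by presburger
    qed
  qed
  moreover have "(\<lambda>v. d v mod 3) ` K \<subseteq> {0..2}" by auto
  ultimately have "card K \<le> card {0..2::int}" by (rule card_inj_on_le) simp
  then show ?thesis by simp
qed simp

lemma clique_number_mod3_reorientation_le_3:
  assumes "unique_path_lengths E"
  shows "clique_number V (mod3_reorientation E) \<le> 3"
proof -
  let ?S = "{card K | K. is_clique V (mod3_reorientation E) K}"
  have bounded: "?S \<subseteq> {..3}" using card_clique_mod3_reorientation_le_3[OF assms] by auto
  have "is_clique V (mod3_reorientation E) {}" unfolding is_clique_def by simp
  then have "?S \<noteq> {}" by blast
  with bounded show ?thesis
    unfolding clique_number_def by (intro Max.boundedI) (auto intro: finite_subset)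
qed

section \<open>Colourings\<close>

definition proper_colouring :: "'a set \<Rightarrow> ('a \<times> 'a) set \<Rightarrow> nat \<Rightarrow> ('a \<Rightarrow> nat) \<Rightarrow> bool" where
  "proper_colouring V E k g \<longleftrightarrow> (\<forall>v \<in> V. g v < k) \<and> (\<forall>(u, v) \<in> E. g u \<noteq> g v)"

lemma proper_colouring_drop_colour:
  assumes g: "proper_colouring V E (Suc k) g" and "E \<subseteq> V \<times> V"
    and "s \<le> k" and missing: "\<forall>v \<in> V. g v \<noteq> s"
  shows "proper_colouring V E k (\<lambda>v. if s < g v then g v - 1 else g v)"
  using assms unfolding proper_colouring_def by (fastforce split: if_splits)

lemma proper_colouring_of_acyclic_colouring:
  assumes "acyclic_colourable V (mod3_reorientation E) k" and E: "E \<subseteq> V \<times> V"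
  shows "\<exists>g. proper_colouring V E (2 * k) g"
proof -
  obtain f where f_bound: "\<forall>v \<in> V. f v < k"
    and f_acyclic: "\<forall>c < k. acyclic (mod3_reorientation E \<inter> ({v \<in> V. f v = c} \<times> {v \<in> V. f v = c}))"
    using assms(1) unfolding acyclic_colourable_def by blast
  define g where "g v = 2 * f v + (if \<exists>w. (w, v) \<in> E \<and> f w = f v then 1 else 0)" for v
  have "g u \<noteq> g v" if uv: "(u, v) \<in> E" for u v
  proof (cases "f u = f v")
    case True
    have "\<not> (\<exists>w. (w, u) \<in> E \<and> f w = f u)"
    proof
      assume "\<exists>w. (w, u) \<in> E \<and> f w = f u"
      then obtain w where w: "(w, u) \<in> E" "f w = f u" by blast
      define C where "C = {x \<in> V. f x = f u}"
      have "w \<in> C" "u \<in> C" "v \<in> C" using w uv E True unfolding C_def by auto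
      moreover have "(w, u) \<in> E ^^ 1" "(u, v) \<in> E ^^ 1" "(w, v) \<in> E ^^ 2"
        using w uv by (auto simp: numeral_2_eq_2 relpow_Suc_I relpow_0_I)
      moreover have "(w, u) \<in> mod3_reorientation E" "(u, v) \<in> mod3_reorientation E"
        using \<open>(w, u) \<in> E ^^ 1\<close> \<open>(u, v) \<in> E ^^ 1\<close> unfolding mod3_reorientation_iff
        by (intro disjI1 exI[of _ 1]; simp)+
      moreover have "(v, w) \<in> mod3_reorientation E"
        using \<open>(w, v) \<in> E ^^ 2\<close> unfolding mod3_reorientation_iff by (intro disjI2 exI[of _ 2]) simp
      ultimately have "(w, u) \<in> mod3_reorientation E \<inter> C \<times> C" "(u, v) \<in> mod3_reorientation E \<inter> C \<times> C"
        "(v, w) \<in> mod3_reorientation E \<inter> C \<times> C"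
        by blast+
      then have "(w, w) \<in> (mod3_reorientation E \<inter> C \<times> C)\<^sup>+" by (meson trancl.simps)
      moreover have "acyclic (mod3_reorientation E \<inter> C \<times> C)"
        unfolding C_def using f_acyclic f_bound uv E by blast
      ultimately show False unfolding acyclic_def by blast
    qed
    moreover have "\<exists>w. (w, v) \<in> E \<and> f w = f v" using uv True by blast
    ultimately show ?thesis using True unfolding g_def by simp
  qed (auto simp: g_def)
  moreover have "g v < 2 * k" if "v \<in> V" for v using f_bound that unfolding g_def by fastforce
  ultimately show ?thesis unfolding proper_colouring_def by blast
qed

lemma acyclic_colourable_card:
  assumes "finite V" and irrefl: "\<And>v. (v, v) \<notin> E"
  shows "acyclic_colourable V E (card V)"
proof -
  obtain f where f: "inj_on f V" "f ` V = {..<card V}"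
    using ex_bij_betw_finite_nat[OF assms(1)] unfolding bij_betw_def atLeast0LessThan by blast
  have "E \<inter> ({v \<in> V. f v = c} \<times> {v \<in> V. f v = c}) = {}" for c
    using f(1) irrefl by (auto dest: inj_onD)
  then show ?thesis
    unfolding acyclic_colourable_def using f(2) by (intro exI[of _ f]) (auto simp: acyclic_def)
qed

section \<open>The digraphs D_m\<close>

lemma dE'_eq_mod3_reorientation: "dE' m = mod3_reorientation (dE m)"
  unfolding dE'_def mod3_reorientation_def dpath_def by blast

lemma relpow_from_sink:
  fixes E :: "('a \<times> 'a) set"
  assumes "\<And>w. (u, w) \<notin> E" and "(u, v) \<in> E ^^ L"
  shows "L = 0"
proof (cases L)
  case (Suc n)
  then show ?thesis using relpow_Suc_D2[of u v n E] assms by auto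
qed

lemma dE_subset_dV: "dE m \<subseteq> dV m \<times> dV m"
proof (induction m rule: dV.induct)
  case (3 k)
  then show ?case by (auto 0 3)
qed simp_all

lemma finite_dV: "finite (dV m)"
proof (induction m rule: dV.induct)
  case (3 k)
  have "{Copy i x | i x. i < Suc k \<and> x \<in> dV (Suc k)} = (\<lambda>(i, x). Copy i x) ` ({..<Suc k} \<times> dV (Suc k))"
    by auto
  moreover have "{New xs | xs. length xs = Suc k \<and> (\<forall>i < Suc k. xs ! i \<in> dV (Suc k))}
      = New ` {xs. set xs \<subseteq> dV (Suc k) \<and> length xs = Suc k}"
    by (auto simp: subset_code(1) all_set_conv_all_nth)
  ultimately show ?case using 3 by (simp add: finite_lists_length_eq)
qed simp_all

lemma dE_source_Copy: "(u, v) \<in> dE m \<Longrightarrow> \<exists>i x. u = Copy i x"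
  by (cases m rule: dV.cases) auto

lemma relpow_dE_from_Copy:
  assumes "(Copy i x, v) \<in> dE (Suc (Suc k)) ^^ L"
  shows "(\<exists>y. v = Copy i y \<and> (x, y) \<in> dE (Suc k) ^^ L) \<or>
         (\<exists>xs L'. v = New xs \<and> L = Suc L' \<and> (x, xs ! i) \<in> dE (Suc k) ^^ L')"
  using assms
proof (induction L arbitrary: v)
  case (Suc L)
  then obtain w where w: "(Copy i x, w) \<in> dE (Suc (Suc k)) ^^ L" "(w, v) \<in> dE (Suc (Suc k))"
    by auto
  from Suc.IH[OF w(1)] show ?case
  proof
    assume "\<exists>y. w = Copy i y \<and> (x, y) \<in> dE (Suc k) ^^ L"
    then obtain y where "w = Copy i y" "(x, y) \<in> dE (Suc k) ^^ L" by blast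
    with w(2) show ?thesis by auto
  next
    assume "\<exists>xs L'. w = New xs \<and> L = Suc L' \<and> (x, xs ! i) \<in> dE (Suc k) ^^ L'"
    with w(2) show ?thesis using dE_source_Copy by blast
  qed
qed simp

lemma unique_path_lengths_dE: "unique_path_lengths (dE m)"
proof
  fix u v L L' show "(u, v) \<in> dE m ^^ L \<Longrightarrow> (u, v) \<in> dE m ^^ L' \<Longrightarrow> L = L'"
  proof (induction m arbitrary: u v L L' rule: dV.induct)
    case (3 k)
    show ?case
    proof (cases "\<exists>i x. u = Copy i x")
      case True
      then obtain i x where u: "u = Copy i x" by blast
      show ?thesis
        using relpow_dE_from_Copy[OF "3.prems"(1)[unfolded u]]
          relpow_dE_from_Copy[OF "3.prems"(2)[unfolded u]] "3.IH" by auto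
    next
      case False
      then have "(u, w) \<notin> dE (Suc (Suc k))" for w using dE_source_Copy by blast
      then show ?thesis using relpow_from_sink "3.prems" by metis
    qed
  qed (auto dest: relpow_from_sink[rotated])
qed

lemma proper_colouring_Copy:
  assumes "proper_colouring (dV (Suc (Suc k))) (dE (Suc (Suc k))) c g" and "i < Suc k"
  shows "proper_colouring (dV (Suc k)) (dE (Suc k)) c (g \<circ> Copy i)"
  using assms unfolding proper_colouring_def by auto

lemma proper_colouring_dE_ge: "proper_colouring (dV m) (dE m) c g \<Longrightarrow> m \<le> c"
proof (induction m arbitrary: g c rule: dV.induct)
  case 2
  then show ?case unfolding proper_colouring_def by simp
next
  case (3 k)
  note colouring = "3.prems"
  have "Suc k \<le> c" using "3.IH"[of 0] proper_colouring_Copy[OF colouring, of 0] by simp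
  moreover have False if c: "c = Suc k"
  proof -
    have all_colours: "\<exists>x \<in> dV (Suc k). g (Copy i x) = s" if "i < Suc k" "s < Suc k" for i s
    proof (rule ccontr)
      assume "\<not> (\<exists>x \<in> dV (Suc k). g (Copy i x) = s)"
      then have "\<forall>x \<in> dV (Suc k). (g \<circ> Copy i) x \<noteq> s" by simp
      from proper_colouring_drop_colour[OF proper_colouring_Copy[OF colouring \<open>i < Suc k\<close>, unfolded c]
          dE_subset_dV _ this]
      have "proper_colouring (dV (Suc k)) (dE (Suc k)) k
          (\<lambda>x. if s < (g \<circ> Copy i) x then (g \<circ> Copy i) x - 1 else (g \<circ> Copy i) x)"
        using \<open>s < Suc k\<close> by simp
      then show False using "3.IH"[of 0] by fastforce
    qed
    define xs where "xs = map (\<lambda>i. SOME x. x \<in> dV (Suc k) \<and> g (Copy i x) = i) [0..<Suc k]"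
    have xs: "xs ! i \<in> dV (Suc k) \<and> g (Copy i (xs ! i)) = i" if "i < Suc k" for i
      using someI_ex[OF all_colours[OF that that, unfolded Bex_def]] that
      unfolding xs_def by (simp del: upt_Suc)
    have "length xs = Suc k" unfolding xs_def by simp
    then have "New xs \<in> dV (Suc (Suc k))" using xs by auto
    then have j: "g (New xs) < Suc k" using colouring c unfolding proper_colouring_def by blast
    then have "(Copy (g (New xs)) (xs ! g (New xs)), New xs) \<in> dE (Suc (Suc k))"
      using xs \<open>length xs = Suc k\<close> by auto
    then show False using xs[OF j] colouring unfolding proper_colouring_def by fastforce
  qed
  ultimately show ?case by (cases "c = Suc k") auto
qed simp

theorem mainTheorem6:
  fixes n :: nat
  assumes "n \<ge> 1"
  shows "(\<forall>vs. odd (length vs) \<and> length vs \<ge> 5 \<longrightarrow> \<not> induced_dcycle (dV n) (dE' n) vs)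
       \<and> clique_number (dV n) (dE' n) \<le> 3
       \<and> dichromatic_number (dV (4 * n)) (dE' (4 * n)) \<ge> n"
proof (intro conjI allI impI)
  fix vs :: "vtx list"
  assume "odd (length vs) \<and> length vs \<ge> 5"
  then show "\<not> induced_dcycle (dV n) (dE' n) vs"
    unfolding dE'_eq_mod3_reorientation using induced_dcycle_mod3_reorientation_even by fastforce
next
  show "clique_number (dV n) (dE' n) \<le> 3"
    unfolding dE'_eq_mod3_reorientation
    by (rule clique_number_mod3_reorientation_le_3[OF unique_path_lengths_dE])
next
  let ?m = "4 * n"
  let ?colourable = "acyclic_colourable (dV ?m) (dE' ?m)"
  have "?colourable (card (dV ?m))"
    unfolding dE'_eq_mod3_reorientation
    using acyclic_colourable_card[OF finite_dV]
      unique_path_lengths.mod3_reorientation_irrefl[OF unique_path_lengths_dE] by blast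
  then have "?colourable (dichromatic_number (dV ?m) (dE' ?m))"
    unfolding dichromatic_number_def by (rule LeastI)
  then obtain g where "proper_colouring (dV ?m) (dE ?m) (2 * dichromatic_number (dV ?m) (dE' ?m)) g"
    using proper_colouring_of_acyclic_colouring dE_subset_dV
    unfolding dE'_eq_mod3_reorientation by blast
  then have "?m \<le> 2 * dichromatic_number (dV ?m) (dE' ?m)" by (rule proper_colouring_dE_ge)
  then show "dichromatic_number (dV ?m) (dE' ?m) \<ge> n" by simp
qed

end
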